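(* Let $X_1,X_2,\dots$ be iid real random variables with common continuous distribution function $F$ having a (Lebesgue) density $f$. For integers $1\le j<k$ let $g_{j,k}$ be the density of $G_{j,k}(x):=\Pr(X_j\le x\mid X_j\text{ and }X_k\text{ are records})$, namely $g_{j,k}(x)=\frac{jk}{k-j}f(x)\left(F^{j-1}(x)-F^{k-1}(x)\right)$, and let $g_j$ be the density of $G_j(x):=\Pr(X_j\le x\mid X_j\text{ is a record})$, namely $g_j(x)=jf(x)F^{j-1}(x)$. Then \[ D_{KL}(g_{j,k},g_j)=\frac{j}{k}. \]
   Context: $X_m$ is a record if $X_m>\max(X_1,\dots,X_{m-1})$; $X_1$ is always a record. For densities $p,q$ the Kullback–Leibler divergence is $D_{KL}(p\|q)=\int_{-\infty}^{\infty}p(x)\log\frac{p(x)}{q(x)}\,dx$, and the Kullback–Leibler distance is $D_{KL}(p,q)=D_{KL}(p\|q)+D_{KL}(q\|p)$. *)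

theory Defs
  imports "HOL-Analysis.Analysis"
begin

text \<open>Kullback--Leibler divergence of densities on the real line (Lebesgue integral),
  with the usual convention that the integrand vanishes where p x = 0.\<close>
definition KL_div :: "(real \<Rightarrow> real) \<Rightarrow> (real \<Rightarrow> real) \<Rightarrow> real" where
  "KL_div p q = (LINT x|lborel. p x * ln (p x / q x))"

definition KL_dist :: "(real \<Rightarrow> real) \<Rightarrow> (real \<Rightarrow> real) \<Rightarrow> real" where
  "KL_dist p q = KL_div p q + KL_div q p"

definition g2 :: "(real \<Rightarrow> real) \<Rightarrow> (real \<Rightarrow> real) \<Rightarrow> nat \<Rightarrow> nat \<Rightarrow> real \<Rightarrow> real" where
  "g2 f F j k x = real (j * k) / real (k - j) * f x * (F x ^ (j - 1) - F x ^ (k - 1))"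

definition g1 :: "(real \<Rightarrow> real) \<Rightarrow> (real \<Rightarrow> real) \<Rightarrow> nat \<Rightarrow> real \<Rightarrow> real" where
  "g1 f F j x = real j * f x * F x ^ (j - 1)"

end

theory Submission
  imports Defs "HOL-Probability.Probability" "HOL-Real_Asymp.Real_Asymp"
begin

text \<open>With \<open>u = F x\<close>, the ratio \<open>g2/g1\<close> is \<open>\<rho>(u) = k/(k-j) (1 - u^(k-j))\<close> and
  \<open>g1 = f \<cdot> j u^(j-1)\<close>, so both divergences are integrals of the form \<open>\<integral> f(x) h(F x) dx\<close>.
  As \<open>F(X)\<close> is uniform on \<open>(0,1)\<close> (probability integral transform), the distance becomes
  \<open>\<integral>\<^sub>0\<^sup>1 j u^(j-1) (\<rho>(u) - 1) ln \<rho>(u) du\<close>. This integrand has the explicit antiderivative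
  \<open>j/(k-j) u^j (1 - u^(k-j)) ln \<rho>(u) + j/k u^k\<close>, which vanishes at 0 and tends to \<open>j/k\<close> at 1.\<close>

lemma (in real_distribution) emeasure_cdf_le:
  assumes no_atoms: "\<And>x. measure M {x} = 0"
  shows "emeasure M {x. cdf M x \<le> a} = emeasure lborel ({0<..<1} \<inter> {..a})"
proof -
  define S where "S = {x. cdf M x \<le> a}"
  have cont: "isCont (cdf M) x" for x
    using no_atoms isCont_cdf by blast
  consider "1 \<le> a" | "S = {}" | "a < 1" "S \<noteq> {}" by linarith
  then show ?thesis
  proof cases
    case 1
    then have "S = UNIV" "{0<..<1} \<inter> {..a} = {0<..<1::real}"
      using cdf_bounded_prob order_trans by (auto simp: S_def)
    then show ?thesis using emeasure_space_1 by (simp add: S_def)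
  next
    case 2
    have "\<not> 0 < a"
    proof
      assume "0 < a"
      then have "\<forall>\<^sub>F x in at_bot. cdf M x < a" using order_tendstoD(2)[OF cdf_lim_at_bot] by blast
      then obtain x where "cdf M x < a" by (metis eventually_at_bot_linorder order_refl)
      with 2 show False by (auto simp: S_def dest: less_imp_le)
    qed
    then have "{0<..<1} \<inter> {..a} = ({}::real set)" by auto
    with 2 show ?thesis by (simp add: S_def)
  next
    case 3
    obtain x0 where "a < cdf M x0"
      using order_tendstoD(1)[OF cdf_lim_at_top_prob \<open>a < 1\<close>] by (auto simp: eventually_at_top_linorder)
    have "x \<le> x0" if "x \<in> S" for x
      using that \<open>a < cdf M x0\<close> cdf_nondecreasing[of x0 x] by (cases "x0 \<le> x") (auto simp: S_def)
    then have bdd: "bdd_above S" by (auto simp: bdd_above_def)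
    define s where "s = Sup S"
    have "closed S" unfolding S_def by (intro closed_Collect_le continuous_intros) (simp add: cont continuous_at_imp_continuous_on)
    then have "s \<in> S" unfolding s_def using 3 bdd by (intro closed_contains_Sup)
    have S: "S = {..s}"
    proof
      show "S \<subseteq> {..s}" using bdd unfolding s_def by (auto intro: cSup_upper)
      show "{..s} \<subseteq> S" using \<open>s \<in> S\<close> cdf_nondecreasing by (auto simp: S_def intro: order_trans)
    qed
    have "cdf M s = a"
    proof (rule ccontr)
      assume "cdf M s \<noteq> a"
      with \<open>s \<in> S\<close> have "cdf M s < a" by (simp add: S_def)
      then have "\<forall>\<^sub>F y in at s. cdf M y < a"
        using cont[of s] by (simp add: isCont_def order_tendstoD(2))
      then have "\<forall>\<^sub>F y in at_right s. s < y \<and> cdf M y < a"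
        by (intro eventually_conj eventually_at_right_less) (simp add: eventually_at_split)
      then obtain y where "s < y" "cdf M y < a"
        using eventually_happens trivial_limit_at_right_real by blast
      then have "y \<in> S" by (simp add: S_def)
      with S \<open>s < y\<close> show False by auto
    qed
    then have "emeasure M S = a" unfolding S by (simp add: emeasure_eq_measure cdf_def)
    moreover have "{0<..<1} \<inter> {..a} = {0<..a}" using 3 by auto
    moreover have "0 \<le> a" using cdf_nonneg \<open>cdf M s = a\<close> by metis
    ultimately show ?thesis by (simp add: S_def)
  qed
qed

lemma (in real_distribution) distributed_cdf_uniform:
  assumes no_atoms: "\<And>x. measure M {x} = 0"
  shows "distributed M lborel (cdf M) (\<lambda>u. ennreal (indicator {0<..<1} u))"
proof -
  have "cdf M \<in> borel_measurable M"
    using cdf_nondecreasing by (simp add: borel_measurable_mono mono_def)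
  from uniform_distrI_borel[OF this, of "{0<..<1}" 1] show ?thesis
    using emeasure_cdf_le[OF no_atoms] by (simp add: divide_ennreal_def)
qed

lemma real_distribution_density_lborel:
  fixes f :: "real \<Rightarrow> real"
  assumes "\<And>x. 0 \<le> f x" "integrable lborel f" "(LINT x|lborel. f x) = 1"
  shows "real_distribution (density lborel f)"
proof -
  have "emeasure (density lborel f) UNIV = ennreal (LINT x|lborel. f x)"
    using assms(1,2) by (simp add: emeasure_density nn_integral_eq_integral)
  then have "prob_space (density lborel f)"
    using assms(3) by (intro prob_spaceI) simp
  then show ?thesis by (simp add: real_distribution_def real_distribution_axioms_def)
qed

lemma cdf_density_lborel:
  fixes f :: "real \<Rightarrow> real"
  assumes "\<And>x. 0 \<le> f x" "integrable lborel f"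
  shows "cdf (density lborel f) x = (LINT t:{..x}|lborel. f t)"
proof -
  have "integrable lborel (\<lambda>t. f t * indicator {..x} t)"
    using integrable_mult_indicator[OF _ assms(2), of "{..x}"] by (simp add: mult.commute)
  then have "(\<integral>\<^sup>+t. ennreal (f t * indicator {..x} t) \<partial>lborel) = (LINT t:{..x}|lborel. f t)"
    using assms(1) by (subst nn_integral_eq_integral) (auto simp: set_lebesgue_integral_def mult.commute)
  then show ?thesis
    using borel_measurable_integrable[OF assms(2)]
    by (simp add: cdf_def measure_def emeasure_density nn_integral_set_ennreal set_lebesgue_integral_def assms(1))
qed

lemma measure_density_lborel_singleton:
  fixes f :: "real \<Rightarrow> real"
  assumes "f \<in> borel_measurable borel"
  shows "measure (density lborel f) {x} = 0"
  using assms AE_lborel_singleton[of x]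
  by (simp add: measure_def emeasure_density nn_integral_0_iff_AE eventually_mono)

lemma
  fixes f F g :: "real \<Rightarrow> real"
  assumes f_nonneg: "\<And>x. 0 \<le> f x"
    and f_int: "integrable lborel f"
    and f_total: "(LINT x|lborel. f x) = 1"
    and F_cdf: "\<And>x. F x = (LINT t:{..x}|lborel. f t)"
    and g_borel [measurable]: "g \<in> borel_measurable borel"
  shows integrable_density_comp_cdf:
      "integrable lborel (\<lambda>x. f x * g (F x)) \<longleftrightarrow> set_integrable lborel {0<..<1} g"
    and integral_density_comp_cdf:
      "(LINT x|lborel. f x * g (F x)) = (LINT u:{0<..<1}|lborel. g u)"
proof -
  interpret real_distribution "density lborel f"
    using f_nonneg f_int f_total by (rule real_distribution_density_lborel)
  have f_borel [measurable]: "f \<in> borel_measurable borel"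
    using f_int by (simp add: borel_measurable_integrable)
  have "F = cdf (density lborel f)"
    using cdf_density_lborel[OF f_nonneg f_int] F_cdf by auto
  then have uniform: "distributed (density lborel f) lborel F (\<lambda>u. ennreal (indicator {0<..<1} u))"
    using distributed_cdf_uniform measure_density_lborel_singleton[OF f_borel] by simp
  have F_borel [measurable]: "F \<in> borel_measurable borel"
    using distributed_measurable[OF uniform] by simp
  have "integrable lborel (\<lambda>x. f x * g (F x)) \<longleftrightarrow> integrable (density lborel f) (\<lambda>x. g (F x))"
    using f_nonneg by (subst integrable_density) auto
  also have "\<dots> \<longleftrightarrow> set_integrable lborel {0<..<1} g"
    using distributed_integrable[OF uniform, of g] by (simp add: set_integrable_def)
  finally show "integrable lborel (\<lambda>x. f x * g (F x)) \<longleftrightarrow> set_integrable lborel {0<..<1} g" .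
  have "(LINT x|lborel. f x * g (F x)) = (LINT x|density lborel f. g (F x))"
    using f_nonneg by (subst integral_density) auto
  also have "\<dots> = (LINT u:{0<..<1}|lborel. g u)"
    using distributed_integral[OF uniform, of g] by (simp add: set_lebesgue_integral_def)
  finally show "(LINT x|lborel. f x * g (F x)) = (LINT u:{0<..<1}|lborel. g u)" .
qed

definition record_ratio :: "nat \<Rightarrow> nat \<Rightarrow> real \<Rightarrow> real" where
  "record_ratio j k u = real k / real (k - j) * (1 - u ^ (k - j))"

lemma record_ratio_pos:
  assumes "j < k" "0 \<le> u" "u < 1"
  shows "0 < record_ratio j k u"
proof -
  have "u ^ (k - j) < 1" using assms by (simp add: power_less_one_iff)
  then show ?thesis using assms(1) by (simp add: record_ratio_def)
qed

lemma record_ratio_le: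
  assumes "j < k" "0 \<le> u"
  shows "record_ratio j k u \<le> real k / real (k - j)"
  unfolding record_ratio_def using assms by (intro mult_left_le) auto

lemma has_real_derivative_record_antideriv:
  assumes "0 < j" "j < k" "0 < u" "u < 1"
  defines "\<rho> \<equiv> record_ratio j k"
  shows "((\<lambda>u. real j / real (k - j) * u ^ j * (1 - u ^ (k - j)) * ln (\<rho> u) + real j / real k * u ^ k)
     has_real_derivative real j * u ^ (j - 1) * ((\<rho> u - 1) * ln (\<rho> u))) (at u)"
proof -
  define m where "m = k - j"
  have km: "real k = real j + real m" "0 < m" using assms(2) by (simp_all add: m_def)
  have um: "u ^ m < 1" using assms(3,4) km(2) by (simp add: power_less_one_iff)
  have \<rho>: "\<rho> = (\<lambda>u. real k / real m * (1 - u ^ m))" by (simp add: \<rho>_def record_ratio_def m_def fun_eq_iff)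
  have pos: "0 < \<rho> u" unfolding \<rho> using um km by simp
  have "k - Suc 0 = j + (m - 1)" using assms(1,2) by (simp add: m_def)
  then have pow: "u ^ j = u ^ (j - 1) * u" "u ^ m = u * u ^ (m - 1)" "u ^ (k - Suc 0) = u ^ (j - 1) * u * u ^ (m - 1)"
    using assms(1) km(2) by (simp_all only: power_add flip: power_Suc power_Suc2) simp_all
  show ?thesis
    unfolding \<rho> m_def[symmetric]
    apply (rule derivative_eq_intros refl pos[unfolded \<rho>])+
    using um km(2) assms(3)
    by (simp only: pow) (simp add: field_simps, simp add: km(1) algebra_simps del: of_nat_add)
qed

lemma mult_ln_nonneg:
  fixes x :: real
  assumes "0 < x"
  shows "0 \<le> (x - 1) * ln x"
  using assms by (cases "1 \<le> x") (auto intro: mult_nonpos_nonpos)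

lemma abs_mult_ln_le:
  fixes x :: real
  assumes "0 < x"
  shows "\<bar>x * ln x\<bar> \<le> 1 + x\<^sup>2"
proof -
  have "x * ln x \<le> x * (x - 1)" using assms ln_le_minus_one by (intro mult_left_mono) auto
  then have "x * ln x \<le> x * x - x" by (simp add: right_diff_distrib)
  moreover have "x * ln (inverse x) \<le> x * (inverse x - 1)"
    using assms by (intro mult_left_mono ln_le_minus_one) auto
  then have "- (x * ln x) \<le> 1 - x" using assms by (simp add: ln_inverse right_diff_distrib)
  moreover have "0 \<le> x * x" by simp
  ultimately show ?thesis unfolding abs_le_iff power2_eq_square using assms by (intro conjI) linarith+
qed

lemma tendsto_mult_ln_at_right_0:
  fixes c :: real
  assumes "0 < c"
  shows "((\<lambda>t. t * ln (c * t)) \<longlongrightarrow> 0) (at_right 0)"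
  using assms by real_asymp

lemma
  assumes "0 < j" "j < k"
  defines "\<rho> \<equiv> record_ratio j k"
  shows set_integrable_record_ratio:
      "set_integrable lborel {0<..<1} (\<lambda>u. real j * u ^ (j - 1) * ((\<rho> u - 1) * ln (\<rho> u)))"
    and set_integral_record_ratio:
      "(LINT u:{0<..<1}|lborel. real j * u ^ (j - 1) * ((\<rho> u - 1) * ln (\<rho> u))) = real j / real k"
proof -
  define m where "m = k - j"
  define K where "K u = real j / real m * u ^ j * (1 - u ^ m) * ln (\<rho> u) + real j / real k * u ^ k" for u
  define H where "H u = real j * u ^ (j - 1) * ((\<rho> u - 1) * ln (\<rho> u))" for u
  have "0 < m" using assms(2) by (simp add: m_def)
  have \<rho>: "\<rho> u = real k / real m * (1 - u ^ m)" for u by (simp add: \<rho>_def record_ratio_def m_def)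
  have \<rho>_pos: "0 < \<rho> u" if "0 \<le> u" "u < 1" for u
    unfolding \<rho>_def using assms(2) that by (rule record_ratio_pos)
  have "((K \<circ> real_of_ereal) \<longlongrightarrow> 0) (at_right (ereal 0))"
  proof -
    have "isCont K 0" unfolding K_def \<rho> using assms(2) \<open>0 < m\<close> by (intro continuous_intros) (auto simp: power_0_left)
    moreover have "K 0 = 0" using assms(1,2) by (simp add: K_def power_0_left)
    ultimately show ?thesis
      by (simp add: ereal_tendsto_simps1 isCont_def filterlim_at_split)
  qed
  moreover have "((K \<circ> real_of_ereal) \<longlongrightarrow> real j / real k) (at_left (ereal 1))"
  proof -
    have "\<forall>\<^sub>F u in at_left 1. u \<in> {0<..<1::real}" by (rule eventually_at_left_real) simp
    then have "\<forall>\<^sub>F u in at_left 1. 0 < 1 - (u::real) ^ m"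
      by (rule eventually_mono) (simp add: power_less_one_iff \<open>0 < m\<close>)
    moreover have "((\<lambda>u. 1 - u ^ m) \<longlongrightarrow> 0) (at_left (1::real))"
      by (rule tendsto_eq_intros refl)+ simp
    ultimately have "filterlim (\<lambda>u. 1 - u ^ m) (at_right 0) (at_left (1::real))"
      by (simp add: filterlim_at eventually_mono)
    from filterlim_compose[OF tendsto_mult_ln_at_right_0[of "real k / real m"] this]
    have "((\<lambda>u. (1 - u ^ m) * ln (\<rho> u)) \<longlongrightarrow> 0) (at_left 1)"
      using \<open>0 < m\<close> assms(2) by (simp add: \<rho>)
    then have "(K \<longlongrightarrow> real j / real m * 1 ^ j * 0 + real j / real k * 1 ^ k) (at_left 1)"
      unfolding K_def mult.assoc[of _ "1 - _"] by (intro tendsto_intros) auto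
    then show ?thesis by (simp add: ereal_tendsto_simps1)
  qed
  moreover have "DERIV K u :> H u" if "0 < u" "u < 1" for u
    unfolding K_def H_def m_def \<rho>_def using has_real_derivative_record_antideriv[OF assms(1,2) that] .
  moreover have "isCont H u" if "0 < u" "u < 1" for u
  proof -
    have "u ^ m < 1" using that \<open>0 < m\<close> by (simp add: power_less_one_iff)
    then show ?thesis
      unfolding H_def \<rho> using assms(2) \<open>0 < m\<close> by (intro continuous_intros) auto
  qed
  moreover have "0 \<le> H u" if "0 < u" "u < 1" for u
    unfolding H_def using that \<rho>_pos[of u] by (simp add: mult_ln_nonneg)
  ultimately have "set_integrable lborel (einterval (ereal 0) (ereal 1)) H \<and> (LBINT u=ereal 0..ereal 1. H u) = real j / real k - 0"
    using interval_integral_FTC_nonneg[of "ereal 0" "ereal 1" K H 0 "real j / real k"] by (auto intro!: AE_I2)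
  then show "set_integrable lborel {0<..<1} H" "(LINT u:{0<..<1}|lborel. H u) = real j / real k"
    by (simp_all add: interval_lebesgue_integral_def)
qed

lemma set_integrable_record_ratio_mult_ln:
  assumes "j < k"
  defines "\<rho> \<equiv> record_ratio j k"
  shows "set_integrable lborel {0<..<1} (\<lambda>u. real j * u ^ (j - 1) * (\<rho> u * ln (\<rho> u)))"
proof (rule set_integrable_bound[where f = "\<lambda>_. real j * (1 + (real k / real (k - j))\<^sup>2)"])
  show "set_integrable lborel {0<..<1::real} (\<lambda>_. real j * (1 + (real k / real (k - j))\<^sup>2))"
    unfolding set_integrable_def by (intro integrable_scaleR_left) (simp add: integrable_indicator_iff)
  show "set_borel_measurable lborel {0<..<1} (\<lambda>u. real j * u ^ (j - 1) * (\<rho> u * ln (\<rho> u)))"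
    unfolding set_borel_measurable_def \<rho>_def record_ratio_def by measurable
  show "AE u in lborel. u \<in> {0<..<1} \<longrightarrow>
      norm (real j * u ^ (j - 1) * (\<rho> u * ln (\<rho> u))) \<le> norm (real j * (1 + (real k / real (k - j))\<^sup>2))"
  proof (intro AE_I2 impI)
    fix u :: real
    assume u: "u \<in> {0<..<1}"
    have \<rho>_pos: "0 < \<rho> u" unfolding \<rho>_def using assms u by (intro record_ratio_pos) auto
    have "\<bar>\<rho> u * ln (\<rho> u)\<bar> \<le> 1 + (\<rho> u)\<^sup>2" using \<rho>_pos by (rule abs_mult_ln_le)
    also have "\<dots> \<le> 1 + (real k / real (k - j))\<^sup>2"
      unfolding \<rho>_def using assms u \<rho>_pos record_ratio_le[of j k u] by (simp add: \<rho>_def power_mono)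
    finally have "\<bar>\<rho> u * ln (\<rho> u)\<bar> \<le> 1 + (real k / real (k - j))\<^sup>2" .
    moreover have "\<bar>u ^ (j - 1)\<bar> \<le> 1" using u by (simp add: power_le_one)
    ultimately have "\<bar>u ^ (j - 1) * (\<rho> u * ln (\<rho> u))\<bar> \<le> 1 * (1 + (real k / real (k - j))\<^sup>2)"
      unfolding abs_mult[of "u ^ (j - 1)"] by (intro mult_mono) auto
    then show "norm (real j * u ^ (j - 1) * (\<rho> u * ln (\<rho> u))) \<le> norm (real j * (1 + (real k / real (k - j))\<^sup>2))"
      by (simp add: abs_mult[of "real j"] mult.assoc mult_left_mono)
  qed
qed

lemma KL_dist_mult_ratio:
  fixes p r :: "real \<Rightarrow> real"
  assumes "integrable lborel (\<lambda>x. p x * (r x * ln (r x)))" "integrable lborel (\<lambda>x. p x * ln (r x))"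
  shows "KL_dist (\<lambda>x. p x * r x) p = (LINT x|lborel. p x * ((r x - 1) * ln (r x)))"
proof -
  \<comment> \<open>no positivity is needed: where \<open>p x = 0\<close> both integrands vanish, as \<open>y / 0 = 0\<close> and \<open>ln 0 = 0\<close>\<close>
  have "KL_div (\<lambda>x. p x * r x) p = (LINT x|lborel. p x * (r x * ln (r x)))"
    unfolding KL_div_def by (rule Bochner_Integration.integral_cong) auto
  moreover have "KL_div p (\<lambda>x. p x * r x) = (LINT x|lborel. - (p x * ln (r x)))"
    unfolding KL_div_def by (rule Bochner_Integration.integral_cong) (auto simp: ln_inverse simp flip: inverse_eq_divide)
  ultimately show ?thesis
    using assms by (simp add: KL_dist_def algebra_simps)
qed

lemma g2_eq_g1_mult_record_ratio:
  assumes "0 < j" "j < k"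
  shows "g2 f F j k x = g1 f F j x * record_ratio j k (F x)"
proof -
  have "F x ^ (k - 1) = F x ^ (j - 1) * F x ^ (k - j)"
    using assms by (simp flip: power_add)
  then show ?thesis
    using assms by (simp add: g2_def g1_def record_ratio_def field_simps of_nat_diff)
qed

lemma set_integrable_record_ratio_ln:
  assumes "0 < j" "j < k"
  defines "\<rho> \<equiv> record_ratio j k"
  shows "set_integrable lborel {0<..<1} (\<lambda>u. real j * u ^ (j - 1) * ln (\<rho> u))"
proof -
  have "set_integrable lborel {0<..<1} (\<lambda>u. real j * u ^ (j - 1) * (\<rho> u * ln (\<rho> u))
      - real j * u ^ (j - 1) * ((\<rho> u - 1) * ln (\<rho> u)))"
    unfolding \<rho>_def
    using set_integrable_record_ratio_mult_ln[OF assms(2)] set_integrable_record_ratio[OF assms(1,2)]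
    by (rule set_integral_diff(1))
  then show ?thesis by (simp add: algebra_simps)
qed

lemma KL_dist_record_densities_eq_unit_integral:
  fixes f F :: "real \<Rightarrow> real"
  assumes f_nonneg: "\<And>x. 0 \<le> f x"
    and f_int: "integrable lborel f"
    and f_total: "(LINT x|lborel. f x) = 1"
    and F_cdf: "\<And>x. F x = (LINT t:{..x}|lborel. f t)"
    and jk: "0 < j" "j < k"
  defines "\<rho> \<equiv> record_ratio j k"
  shows "KL_dist (g2 f F j k) (g1 f F j)
    = (LINT u:{0<..<1}|lborel. real j * u ^ (j - 1) * ((\<rho> u - 1) * ln (\<rho> u)))"
proof -
  define w where "w u = real j * u ^ (j - 1)" for u :: real
  have [measurable]: "\<rho> \<in> borel_measurable borel" "w \<in> borel_measurable borel"
    unfolding \<rho>_def record_ratio_def[abs_def] w_def[abs_def] by measurable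
  have g1: "g1 f F j x = f x * w (F x)" for x by (simp add: g1_def w_def)
  have g2: "g2 f F j k = (\<lambda>x. g1 f F j x * \<rho> (F x))"
    using g2_eq_g1_mult_record_ratio[OF jk] by (simp add: \<rho>_def fun_eq_iff)
  note to_unit = integrable_density_comp_cdf[OF f_nonneg f_int f_total F_cdf]
    integral_density_comp_cdf[OF f_nonneg f_int f_total F_cdf]
  have "integrable lborel (\<lambda>x. f x * (w (F x) * (\<rho> (F x) * ln (\<rho> (F x)))))"
    using set_integrable_record_ratio_mult_ln[OF jk(2)]
    by (intro to_unit(1)[THEN iffD2]) (measurable, simp add: \<rho>_def w_def)
  moreover have "integrable lborel (\<lambda>x. f x * (w (F x) * ln (\<rho> (F x))))"
    using set_integrable_record_ratio_ln[OF jk]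
    by (intro to_unit(1)[THEN iffD2]) (measurable, simp add: \<rho>_def w_def)
  ultimately have "KL_dist (g2 f F j k) (g1 f F j)
      = (LINT x|lborel. f x * (w (F x) * ((\<rho> (F x) - 1) * ln (\<rho> (F x)))))"
    unfolding g2 by (subst KL_dist_mult_ratio) (simp_all add: g1 mult.assoc)
  also have "\<dots> = (LINT u:{0<..<1}|lborel. w u * ((\<rho> u - 1) * ln (\<rho> u)))"
    by (rule to_unit(2)) measurable
  finally show ?thesis by (simp add: w_def)
qed

theorem proposition5:
  fixes f F :: "real \<Rightarrow> real" and j k :: nat
  assumes f_nonneg: "\<And>x. 0 \<le> f x"
    and f_int: "integrable lborel f"
    and f_total: "(LINT x|lborel. f x) = 1"
    and F_cdf: "\<And>x. F x = (LINT t:{..x}|lborel. f t)"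
    and jk: "1 \<le> j" "j < k"
  shows "KL_dist (g2 f F j k) (g1 f F j) = real j / real k"
proof -
  have j: "0 < j" using jk(1) by simp
  show ?thesis
    using KL_dist_record_densities_eq_unit_integral[OF f_nonneg f_int f_total F_cdf j jk(2)]
      set_integral_record_ratio[OF j jk(2)]
    by simp
qed

end
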